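(* Let $n\ge 2$ and $\ell\ge 2$ be integers, let $G=\mathbb{Z}_{\ell^n-(\ell-1)^n}$, and let $\alpha=\ell(\ell-1)^{-1}\in G$. Let $L=(\ell,\ell,\dots,\ell)\in\mathbb{Z}^n$ and $K=(\ell-1,\ell-1,\dots,\ell-1)\in\mathbb{Z}^n$. Then $\mathcal{S}_{L,K}$ splits $G$ with the splitting sequence $\beta=\beta_1,\dots,\beta_n$ defined by $\beta_i=\alpha^{i-1}$, $1\le i\le n$.
   Context: $\mathbb{Z}_m$ is the ring of integers modulo $m$ (here $\ell-1$ is invertible in it). For integer vectors $L,K$ with $0<k_i<\ell_i$, the discrete $n$-dimensional chair is $\mathcal{S}_{L,K}=\{(x_1,\dots,x_n)\in\mathbb{Z}^n: 0\le x_i<\ell_i \text{ for all } i, \text{ and there exists } j \text{ with } x_j<\ell_j-k_j\}$. For an Abelian group $G$, a sequence $\beta=\beta_1,\dots,\beta_n$ in $G$ and $X\in\mathbb{Z}^n$, $X\cdot\beta=\sum_i x_i\beta_i$. A finite set $\mathcal{S}\subset\mathbb{Z}^n$ splits $G$ with splitting sequence $\beta$ if $\{\mathcal{E}\cdot\beta:\mathcal{E}\in\mathcal{S}\}$ consists of $|\mathcal{S}|$ distinct elements of $G$. *)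

theory Defs
  imports "HOL-Number_Theory.Number_Theory"
begin

(* Points of Z^n are functions nat => int, coordinates indexed 0..n-1, zero outside. *)
definition chair :: "nat \<Rightarrow> (nat \<Rightarrow> int) \<Rightarrow> (nat \<Rightarrow> int) \<Rightarrow> (nat \<Rightarrow> int) set" where
  "chair n L K = {x. (\<forall>i<n. 0 \<le> x i \<and> x i < L i) \<and> (\<exists>j<n. x j < L j - K j) \<and> (\<forall>i\<ge>n. x i = 0)}"

(* S splits Z_m with splitting sequence beta iff the map X \<mapsto> X\<cdot>beta is injective on S
   (for finite S this is: |S| distinct elements). *)
definition splits_mod :: "int \<Rightarrow> nat \<Rightarrow> (nat \<Rightarrow> int) set \<Rightarrow> (nat \<Rightarrow> int) \<Rightarrow> bool" where
  "splits_mod m n S \<beta> = inj_on (\<lambda>X. (\<Sum>i<n. X i * \<beta> i) mod m) S"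

end

theory Submission
  imports Defs
begin

text \<open>Multiplying by \<open>(l - 1) ^ (n - 1)\<close> turns \<open>X \<cdot> \<beta>\<close> into the integer
  \<open>W X = (\<Sum>i<n. x i * l ^ i * (l - 1) ^ (n - 1 - i))\<close> modulo \<open>m = l ^ n - (l - 1) ^ n\<close>.
  If \<open>W X \<equiv> W Y\<close> then, since \<open>l\<close> and \<open>l - 1\<close> are coprime, the difference \<open>d = X - Y\<close>
  is an integer combination of the cyclic relations \<open>l e\<^sub>i - (l - 1) e\<^sub>i\<^sub>+\<^sub>1\<close>
  (indices mod \<open>n\<close>), i.e. \<open>d\<^sub>i = (l - 1) c\<^sub>i\<^sub>-\<^sub>1 - l c\<^sub>i\<close> for some integer carries \<open>c\<close>.
  Points of the chair have digits in \<open>[0, l)\<close> and at least one zero digit, so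
  \<open>|d\<^sub>i| \<le> l - 1\<close> and \<open>d\<close> has an entry \<open>\<ge> 0\<close> and one \<open>\<le> 0\<close>. A positive maximal carry
  would then propagate around the cycle and make every \<open>d\<^sub>i\<close> negative, and dually for a
  negative minimal carry; hence \<open>c = 0\<close> and \<open>X = Y\<close>.\<close>

definition cyc_pred :: "nat \<Rightarrow> nat \<Rightarrow> nat" where
  "cyc_pred n i = (if i = 0 then n - 1 else i - 1)"

lemma cyc_pred_less: "i < n \<Longrightarrow> cyc_pred n i < n"
  by (auto simp: cyc_pred_def)

lemma cyc_pred_closed_all:
  fixes P :: "nat \<Rightarrow> bool"
  assumes "i0 < n" "P i0" and closed: "\<And>i. i < n \<Longrightarrow> P i \<Longrightarrow> P (cyc_pred n i)" and "j < n"
  shows "P j"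
proof -
  have down: "P k" if "k \<le> i" "i < n" "P i" for i k
    using that(1,3)
  proof (induction k rule: inc_induct)
    case (step k)
    then show ?case using closed[of "Suc k"] that(2) by (simp add: cyc_pred_def)
  qed
  have "P 0" using down[of 0 i0] assms by simp
  then have "P (n - 1)" using closed[of 0] assms by (simp add: cyc_pred_def)
  then show ?thesis using down[of j "n - 1"] assms by simp
qed

lemma prefix_weighted_sum_dvd:
  fixes a b k :: int and d :: "nat \<Rightarrow> int"
  assumes "coprime a b"
    and sum: "(\<Sum>j<n. d j * a ^ j * b ^ (n - 1 - j)) = (a ^ n - b ^ n) * k"
    and "i < n"
  shows "a ^ Suc i dvd (\<Sum>j\<le>i. d j * a ^ j * b ^ (i - j)) + b ^ Suc i * k"
proof -
  let ?P = "\<Sum>j\<le>i. d j * a ^ j * b ^ (i - j)"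
  let ?tail = "\<Sum>j\<in>{Suc i..<n}. d j * a ^ j * b ^ (n - 1 - j)"
  have "b ^ (n - 1 - i) * ?P = (\<Sum>j\<le>i. d j * a ^ j * b ^ (n - 1 - j))"
    unfolding sum_distrib_left
  proof (rule sum.cong)
    fix j assume "j \<in> {..i}"
    then have "n - 1 - i + (i - j) = n - 1 - j" using \<open>i < n\<close> by simp
    then show "b ^ (n - 1 - i) * (d j * a ^ j * b ^ (i - j)) = d j * a ^ j * b ^ (n - 1 - j)"
      by (metis power_add mult.left_commute)
  qed simp
  then have P_eq: "b ^ (n - 1 - i) * ?P = (a ^ n - b ^ n) * k - ?tail"
    using sum.atLeastLessThan_concat[of 0 "Suc i" n "\<lambda>j. d j * a ^ j * b ^ (n - 1 - j)"] sum \<open>i < n\<close>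
    by (simp only: atLeast0LessThan lessThan_Suc_atMost) linarith
  have "n - 1 - i + Suc i = n" using \<open>i < n\<close> by simp
  then have b_pow: "b ^ (n - 1 - i) * b ^ Suc i = b ^ n" by (metis power_add)
  have "b ^ (n - 1 - i) * (?P + b ^ Suc i * k) = b ^ (n - 1 - i) * ?P + (b ^ (n - 1 - i) * b ^ Suc i) * k"
    by (simp add: algebra_simps)
  also have "\<dots> = a ^ n * k - ?tail"
    unfolding P_eq b_pow by (simp add: algebra_simps)
  finally have "b ^ (n - 1 - i) * (?P + b ^ Suc i * k) = a ^ n * k - ?tail" .
  moreover have "a ^ Suc i dvd ?tail"
  proof (rule dvd_sum)
    fix j assume "j \<in> {Suc i..<n}"
    then show "a ^ Suc i dvd d j * a ^ j * b ^ (n - 1 - j)"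
      using le_imp_power_dvd[of "Suc i" j a] by simp
  qed
  moreover have "a ^ Suc i dvd a ^ n * k"
    using le_imp_power_dvd[of "Suc i" n a] \<open>i < n\<close> by simp
  ultimately have "a ^ Suc i dvd b ^ (n - 1 - i) * (?P + b ^ Suc i * k)"
    by simp
  moreover have "coprime (a ^ Suc i) (b ^ (n - 1 - i))" using assms(1) by simp
  ultimately show ?thesis using coprime_dvd_mult_right_iff by blast
qed

lemma weighted_sum_multiple_imp_carries:
  fixes a b k :: int and d :: "nat \<Rightarrow> int"
  assumes "coprime a b" "a \<noteq> 0" "n \<ge> 1"
    and sum: "(\<Sum>j<n. d j * a ^ j * b ^ (n - 1 - j)) = (a ^ n - b ^ n) * k"
  shows "\<exists>c. \<forall>i<n. d i = b * c (cyc_pred n i) - a * c i"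
proof -
  define P where "P i = (\<Sum>j\<le>i. d j * a ^ j * b ^ (i - j))" for i
  \<comment> \<open>Solving \<open>a * c i = b * c (i - 1) - d i\<close> forward from \<open>c (n - 1) = - k\<close> forces
    \<open>a ^ (i + 1) * c i = - (P i + b ^ (i + 1) * k)\<close>; the divisions are exact by the previous lemma.\<close>
  define c where "c i = - ((P i + b ^ Suc i * k) div a ^ Suc i)" for i
  have c_eq: "a ^ Suc i * c i = - (P i + b ^ Suc i * k)" if "i < n" for i
    using prefix_weighted_sum_dvd[OF assms(1) sum that] by (simp add: c_def P_def)
  have P_Suc: "P (Suc i) = b * P i + d (Suc i) * a ^ Suc i" for i
  proof -
    have "b * P i = (\<Sum>j\<le>i. d j * a ^ j * b ^ (Suc i - j))"
      unfolding P_def sum_distrib_left by (intro sum.cong refl) (simp add: Suc_diff_le)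
    then show ?thesis unfolding P_def by simp
  qed
  have "d i = b * c (cyc_pred n i) - a * c i" if "i < n" for i
  proof (cases i)
    case 0
    have "P (n - 1) = (a ^ n - b ^ n) * k"
      using sum \<open>n \<ge> 1\<close> by (simp add: P_def lessThan_Suc_atMost[symmetric])
    then have "a ^ n * c (n - 1) = a ^ n * (- k)" using c_eq[of "n - 1"] \<open>n \<ge> 1\<close>
      by (simp add: algebra_simps)
    then have "c (n - 1) = - k" using assms(2) by (metis mult_left_cancel power_not_zero)
    then show ?thesis using c_eq[of 0] that 0 by (simp add: P_def cyc_pred_def algebra_simps)
  next
    case (Suc h)
    have "a ^ Suc h * (a * c i) = a ^ Suc i * c i"
      using Suc by simp
    also have "\<dots> = - (b * (P h + b ^ Suc h * k)) - d i * a ^ Suc h"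
      using c_eq[OF that] Suc by (simp add: P_Suc algebra_simps)
    also have "\<dots> = b * (a ^ Suc h * c h) - d i * a ^ Suc h"
      using c_eq[of h] that Suc by (simp only: mult_minus_right)
    also have "\<dots> = a ^ Suc h * (b * c h - d i)"
      by (simp add: algebra_simps)
    finally have "a ^ Suc h * (a * c i) = a ^ Suc h * (b * c h - d i)" .
    then show ?thesis using assms(2) Suc by (simp add: cyc_pred_def)
  qed
  then show ?thesis by blast
qed

lemma carries_nonpos:
  fixes l :: int and c d :: "nat \<Rightarrow> int"
  assumes "l \<ge> 1"
    and carry: "\<And>i. i < n \<Longrightarrow> d i = (l - 1) * c (cyc_pred n i) - l * c i"
    and lower: "\<And>i. i < n \<Longrightarrow> 1 - l \<le> d i"
    and "j < n" "0 \<le> d j" "i < n"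
  shows "c i \<le> 0"
proof (rule ccontr)
  define M where "M = Max (c ` {..<n})"
  have le_M: "c i \<le> M" if "i < n" for i
    using that by (simp add: M_def)
  obtain i0 where "i0 < n" "c i0 = M"
    using Max_in[of "c ` {..<n}"] \<open>j < n\<close> unfolding M_def by fastforce
  assume "\<not> c i \<le> 0"
  then have "M > 0" using le_M[OF \<open>i < n\<close>] by simp
  \<comment> \<open>A maximal carry can only come from a maximal carry, because \<open>d \<ge> 1 - l\<close>.\<close>
  have "c (cyc_pred n i) = M" if "i < n" "c i = M" for i
  proof (rule ccontr)
    assume "c (cyc_pred n i) \<noteq> M"
    then have "c (cyc_pred n i) \<le> M - 1" using le_M[OF cyc_pred_less[OF \<open>i < n\<close>]] by simp
    then have "(l - 1) * c (cyc_pred n i) \<le> (l - 1) * (M - 1)"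
      using \<open>l \<ge> 1\<close> by (intro mult_left_mono) auto
    then show False using carry[OF \<open>i < n\<close>] lower[OF \<open>i < n\<close>] \<open>c i = M\<close> \<open>M > 0\<close>
      by (simp add: algebra_simps)
  qed
  then have "c i = M" if "i < n" for i
    using cyc_pred_closed_all[of i0 n "\<lambda>i. c i = M" i] \<open>i0 < n\<close> \<open>c i0 = M\<close> that by blast
  then have "d j = - M" using carry[OF \<open>j < n\<close>] cyc_pred_less[OF \<open>j < n\<close>] \<open>j < n\<close>
    by (simp add: algebra_simps)
  then show False using \<open>0 \<le> d j\<close> \<open>M > 0\<close> by simp
qed

lemma carries_zero:
  fixes l :: int and c d :: "nat \<Rightarrow> int"
  assumes "l \<ge> 1"
    and carry: "\<And>i. i < n \<Longrightarrow> d i = (l - 1) * c (cyc_pred n i) - l * c i"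
    and bound: "\<And>i. i < n \<Longrightarrow> \<bar>d i\<bar> \<le> l - 1"
    and "j < n" "0 \<le> d j" "j' < n" "d j' \<le> 0" "i < n"
  shows "c i = 0"
proof -
  have "c i \<le> 0"
    using carries_nonpos[of l n d c j i] assms by (fastforce simp: abs_le_iff)
  moreover have "- c i \<le> 0"
    using carries_nonpos[of l n "\<lambda>i. - d i" "\<lambda>i. - c i" j' i] assms
    by (fastforce simp: abs_le_iff algebra_simps)
  ultimately show ?thesis by simp
qed

lemma digits_eq_if_weighted_sums_cong:
  fixes l :: int and x y :: "nat \<Rightarrow> int"
  assumes "l \<ge> 1"
    and x_digits: "\<And>i. i < n \<Longrightarrow> 0 \<le> x i \<and> x i < l" and "j < n" "x j = 0"
    and y_digits: "\<And>i. i < n \<Longrightarrow> 0 \<le> y i \<and> y i < l" and "j' < n" "y j' = 0"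
    and cong: "[(\<Sum>i<n. x i * l ^ i * (l - 1) ^ (n - 1 - i))
              = (\<Sum>i<n. y i * l ^ i * (l - 1) ^ (n - 1 - i))] (mod l ^ n - (l - 1) ^ n)"
    and "i < n"
  shows "x i = y i"
proof -
  define d where "d i = x i - y i" for i
  have "(l ^ n - (l - 1) ^ n) dvd (\<Sum>i<n. d i * l ^ i * (l - 1) ^ (n - 1 - i))"
    using cong by (simp add: cong_iff_dvd_diff d_def algebra_simps flip: sum_subtractf)
  then obtain k where "(\<Sum>i<n. d i * l ^ i * (l - 1) ^ (n - 1 - i)) = (l ^ n - (l - 1) ^ n) * k"
    by blast
  then obtain c where carry: "\<And>i. i < n \<Longrightarrow> d i = (l - 1) * c (cyc_pred n i) - l * c i"
    using weighted_sum_multiple_imp_carries[of l "l - 1" n d k] \<open>l \<ge> 1\<close> \<open>j < n\<close> by auto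
  have "c h = 0" if "h < n" for h
  proof (rule carries_zero[of l n d c j' j])
    show "\<bar>d i\<bar> \<le> l - 1" if "i < n" for i
      using x_digits[OF that] y_digits[OF that] by (simp add: d_def abs_le_iff, linarith)
  qed (use assms carry that in \<open>auto simp: d_def\<close>)
  then show ?thesis
    using carry[OF \<open>i < n\<close>] cyc_pred_less[OF \<open>i < n\<close>] \<open>i < n\<close> by (simp add: d_def)
qed

lemma cong_scaled_power_sum:
  fixes a b \<alpha> m :: int
  assumes "[b * \<alpha> = a] (mod m)"
  shows "[b ^ (n - 1) * (\<Sum>i<n. z i * \<alpha> ^ i) = (\<Sum>i<n. z i * a ^ i * b ^ (n - 1 - i))] (mod m)"
proof -
  have "[b ^ (n - 1) * (z i * \<alpha> ^ i) = z i * a ^ i * b ^ (n - 1 - i)] (mod m)" if "i < n" for i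
  proof -
    have "b ^ (n - 1) * (z i * \<alpha> ^ i) = z i * (b * \<alpha>) ^ i * b ^ (n - 1 - i)"
      using that by (simp add: algebra_simps flip: power_add)
    also have "[\<dots> = z i * a ^ i * b ^ (n - 1 - i)] (mod m)"
      by (intro cong_mult cong_pow assms cong_refl)
    finally show ?thesis .
  qed
  then show ?thesis unfolding sum_distrib_left by (intro cong_sum) simp
qed

lemma mem_chair_const_iff:
  fixes l :: int
  shows "x \<in> chair n (\<lambda>_. l) (\<lambda>_. l - 1)
    \<longleftrightarrow> (\<forall>i<n. 0 \<le> x i \<and> x i < l) \<and> (\<exists>j<n. x j = 0) \<and> (\<forall>i\<ge>n. x i = 0)"
  unfolding chair_def by (force simp: not_less)

theorem mainTheorem3:
  fixes n :: nat and l :: int and \<alpha> :: int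
  assumes "n \<ge> 2" and "l \<ge> 2"
    and "[(l - 1) * \<alpha> = l] (mod (l ^ n - (l - 1) ^ n))"
  shows "splits_mod (l ^ n - (l - 1) ^ n) n (chair n (\<lambda>_. l) (\<lambda>_. l - 1)) (\<lambda>i. \<alpha> ^ i)"
  unfolding splits_mod_def
proof (rule inj_onI)
  let ?m = "l ^ n - (l - 1) ^ n"
  fix x y
  assume "x \<in> chair n (\<lambda>_. l) (\<lambda>_. l - 1)" "y \<in> chair n (\<lambda>_. l) (\<lambda>_. l - 1)"
    and same_residue: "(\<Sum>i<n. x i * \<alpha> ^ i) mod ?m = (\<Sum>i<n. y i * \<alpha> ^ i) mod ?m"
  then have x: "\<forall>i<n. 0 \<le> x i \<and> x i < l" "\<exists>j<n. x j = 0" "\<forall>i\<ge>n. x i = 0"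
    and y: "\<forall>i<n. 0 \<le> y i \<and> y i < l" "\<exists>j<n. y j = 0" "\<forall>i\<ge>n. y i = 0"
    by (simp_all add: mem_chair_const_iff)
  from same_residue have "[(l - 1) ^ (n - 1) * (\<Sum>i<n. x i * \<alpha> ^ i)
      = (l - 1) ^ (n - 1) * (\<Sum>i<n. y i * \<alpha> ^ i)] (mod ?m)"
    by (intro cong_scalar_left) (simp add: cong_def)
  then have "[(\<Sum>i<n. x i * l ^ i * (l - 1) ^ (n - 1 - i))
      = (\<Sum>i<n. y i * l ^ i * (l - 1) ^ (n - 1 - i))] (mod ?m)"
    using cong_scaled_power_sum[OF assms(3)] by (meson cong_sym cong_trans)
  moreover obtain jx jy where "jx < n" "x jx = 0" "jy < n" "y jy = 0" using x(2) y(2) by blast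
  ultimately have "x i = y i" if "i < n" for i
    using digits_eq_if_weighted_sums_cong[of l n x jx y jy i] x(1) y(1) \<open>l \<ge> 2\<close> that by simp
  then show "x = y"
    using x(3) y(3) by (metis not_le ext)
qed

end
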